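(* Let $n\ge3$, $\alpha\in(-\tfrac12,\infty)$, $p\in(1,\infty)$ with conjugate exponent $q=p/(p-1)$. Then $G_p$, defined on $[0,1)$, is (right-)differentiable at $r=0$ and $$G_p'(0)=C_{n,\alpha}(n+2\alpha)\left(\frac{\Gamma(\frac n2)\Gamma(\frac{1+q}{2})}{\sqrt\pi\,\Gamma(\frac{n+q}{2})}\right)^{1/q}.$$
   Context: $\mathbb{S}^{n-1}$ is the unit sphere of $\mathbb{R}^n$ with normalized surface measure $\sigma$, $e_n=(0,\dots,0,1)$, $C_{n,\alpha}=\frac{\Gamma(\frac n2+\alpha)\Gamma(1+\alpha)}{\Gamma(\frac n2)\Gamma(1+2\alpha)}$, $P_\alpha(x,\zeta)=C_{n,\alpha}\frac{(1-|x|^2)^{1+2\alpha}}{|x-\zeta|^{n+2\alpha}}$ for $|x|<1$, $\zeta\in\mathbb{S}^{n-1}$. For $r\in[0,1)$, $G_p(r)=\inf_{a\in[0,\infty)}\left(\int_{\mathbb{S}^{n-1}}|P_\alpha(re_n,\eta)-a|^q\,d\sigma(\eta)\right)^{1/q}$. *)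

theory Defs
  imports "HOL-Analysis.Analysis"
begin

text \<open>Normalized surface measure on the unit sphere of real^'n, realised as the
  cone measure: the push-forward of the uniform probability measure on the unit
  ball under radial projection x \<mapsto> x/|x|.\<close>
definition sphere_sigma :: "(real^'n::finite) measure" where
  "sphere_sigma = distr (uniform_measure lborel (ball 0 1)) borel (\<lambda>x. x /\<^sub>R norm x)"

definition C_const :: "real \<Rightarrow> real \<Rightarrow> real" where
  "C_const n \<alpha> = Gamma (n/2 + \<alpha>) * Gamma (1 + \<alpha>) / (Gamma (n/2) * Gamma (1 + 2*\<alpha>))"

definition P_kernel :: "real \<Rightarrow> real^'n::finite \<Rightarrow> real^'n \<Rightarrow> real" where
  "P_kernel \<alpha> x \<zeta> = C_const (real CARD('n)) \<alpha> * (1 - (norm x)\<^sup>2) powr (1 + 2*\<alpha>)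
     / (norm (x - \<zeta>)) powr (real CARD('n) + 2*\<alpha>)"

definition G_fun :: "real \<Rightarrow> real \<Rightarrow> real^'n::finite \<Rightarrow> real \<Rightarrow> real" where
  "G_fun \<alpha> p e r = (let q = p / (p - 1) in
     INF a\<in>{0::real..}. (integral\<^sup>L sphere_sigma (\<lambda>\<eta>. \<bar>P_kernel \<alpha> (r *\<^sub>R e) \<eta> - a\<bar> powr q)) powr (1/q))"

end

(*
  Along the axis, for |eta| = 1 the kernel is P(r e, eta) = C phi(r, eta_e) with
  phi(r, t) = (1 - r^2)^(1+2 alpha) (1 - 2 r t + r^2)^(-(n+2 alpha)/2) = 1 + (n + 2 alpha) r t + o(r),
  uniformly in t.  Writing a = C - C r c, the L^q(sigma) distance from P(r e, .) to a is C r times the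
  L^q norm of c + (n + 2 alpha) eta_e + o(1).  Since sigma is invariant under eta |-> -eta and |.|^q is
  convex, no shift c decreases the L^q norm of the odd function eta_e; with the continuity of the L^q
  norm under uniformly small perturbations this gives G_p(r) / r -> C (n + 2 alpha) ||eta_e||_q,
  while G_p(0) = 0 (take a = C).

  The moment of eta_e is computed on the unit ball B, since sigma is the radial projection of the
  normalised Lebesgue measure on B: the integral of |x_e|^q over B is a Beta integral over slices, and
  by homogeneity the integral of |x|^q g(x/|x|) over B is n/(n+q) times that of g(x/|x|).
*)

theory Submission
  imports Defs "HOL-Probability.Probability"
begin

section \<open>\<open>L\<^sup>p\<close> norms on probability spaces\<close>

definition Lp_norm :: "'a measure \<Rightarrow> real \<Rightarrow> ('a \<Rightarrow> real) \<Rightarrow> real" where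
  "Lp_norm M p f = (\<integral>x. \<bar>f x\<bar> powr p \<partial>M) powr (1/p)"

lemma Lp_norm_nonneg [simp]: "Lp_norm M p f \<ge> 0"
  by (simp add: Lp_norm_def)

lemma Lp_norm_cmult:
  assumes "p > 0" "c \<ge> 0"
  shows "Lp_norm M p (\<lambda>x. c * f x) = c * Lp_norm M p f"
proof -
  have "(\<integral>x. \<bar>c * f x\<bar> powr p \<partial>M) = c powr p * (\<integral>x. \<bar>f x\<bar> powr p \<partial>M)"
    using assms by (simp add: abs_mult powr_mult)
  moreover have "(\<integral>x. \<bar>f x\<bar> powr p \<partial>M) \<ge> 0"
    by (intro integral_nonneg_AE) auto
  ultimately show ?thesis
    using assms by (simp add: Lp_norm_def powr_mult powr_powr)
qed

lemma powr_tangent_le: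
  fixes x y q :: real
  assumes "q \<ge> 1" "x \<ge> 0" "y \<ge> 0"
  shows "x powr q + q * x powr (q - 1) * (y - x) \<le> y powr q"
proof (cases "x = 0")
  case False
  then have "x > 0" using assms by simp
  show ?thesis
  proof (cases "y = 0")
    case True
    have "x powr (q - 1) * x = x powr q"
      using \<open>x > 0\<close> powr_add [of x "q - 1" 1] by simp
    then show ?thesis
      using True assms \<open>x > 0\<close> by (simp add: mult.assoc mult_le_cancel_right1)
  next
    case False
    then have "y > 0" using assms by simp
    have "((\<lambda>x. x powr q) has_real_derivative q * x powr (q - 1)) (at x within {0<..})"
      using \<open>x > 0\<close> by (auto intro!: derivative_eq_intros)
    then have "y powr q - x powr q \<ge> q * x powr (q - 1) * (y - x)"
      using \<open>x > 0\<close> \<open>y > 0\<close> assms(1)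
      by (intro convex_on_imp_above_tangent) (auto simp: interior_open intro: powr_convex)
    then show ?thesis by simp
  qed
qed simp

lemma abs_powr_diff_le:
  fixes a b q :: real
  assumes "q \<ge> 1" "a \<ge> 0" "b \<ge> 0"
  shows "\<bar>a powr q - b powr q\<bar> \<le> q * max a b powr (q - 1) * \<bar>a - b\<bar>"
proof -
  have *: "\<bar>x powr q - y powr q\<bar> \<le> q * x powr (q - 1) * (x - y)" if "0 \<le> y" "y \<le> x" for x y :: real
  proof -
    have "x powr q + q * x powr (q - 1) * (y - x) \<le> y powr q"
      using powr_tangent_le [of q x y] that assms(1) by simp
    moreover have "y powr q \<le> x powr q"
      using powr_mono2 [of q y x] that assms(1) by simp
    ultimately show ?thesis by (simp add: algebra_simps)
  qed
  show ?thesis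
    using *[of b a] *[of a b] assms by (cases "b \<le> a") (auto simp: max_def abs_minus_commute)
qed

lemma powr_midpoint_le:
  fixes a b q :: real
  assumes "q \<ge> 1" "a \<ge> 0" "b \<ge> 0"
  shows "2 * ((a + b) / 2) powr q \<le> a powr q + b powr q"
  using powr_tangent_le [of q "(a + b) / 2" a] powr_tangent_le [of q "(a + b) / 2" b] assms
  by (simp add: field_simps)

lemma abs_half_diff_powr_le:
  fixes u v q :: real
  assumes "q \<ge> 1"
  shows "2 * \<bar>(u - v) / 2\<bar> powr q \<le> \<bar>u\<bar> powr q + \<bar>v\<bar> powr q"
proof -
  have "\<bar>(u - v) / 2\<bar> powr q \<le> ((\<bar>u\<bar> + \<bar>v\<bar>) / 2) powr q"
    using assms by (intro powr_mono2) auto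
  with powr_midpoint_le [of q "\<bar>u\<bar>" "\<bar>v\<bar>"] assms show ?thesis by simp
qed

lemma (in finite_measure) integrable_abs_powr_bounded:
  fixes f :: "'a \<Rightarrow> real"
  assumes "f \<in> borel_measurable M" "AE x in M. \<bar>f x\<bar> \<le> B" "p \<ge> 0"
  shows "integrable M (\<lambda>x. \<bar>f x\<bar> powr p)"
proof (rule integrable_const_bound [where B = "B powr p"])
  show "AE x in M. norm (\<bar>f x\<bar> powr p) \<le> B powr p"
    using assms(2) by eventually_elim (use assms(3) in \<open>auto intro: powr_mono2\<close>)
qed (use assms(1) in measurable)

lemma (in finite_measure) Lp_norm_mono:
  assumes "p > 0" "f \<in> borel_measurable M" "g \<in> borel_measurable M"
    and "AE x in M. \<bar>f x\<bar> \<le> \<bar>g x\<bar>" "AE x in M. \<bar>g x\<bar> \<le> B"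
  shows "Lp_norm M p f \<le> Lp_norm M p g"
proof -
  have "AE x in M. \<bar>f x\<bar> \<le> B"
    using assms(4,5) by eventually_elim simp
  moreover have "AE x in M. \<bar>f x\<bar> powr p \<le> \<bar>g x\<bar> powr p"
    using assms(4) by eventually_elim (use assms(1) in \<open>auto intro: powr_mono2\<close>)
  ultimately have "(\<integral>x. \<bar>f x\<bar> powr p \<partial>M) \<le> (\<integral>x. \<bar>g x\<bar> powr p \<partial>M)"
    using assms by (intro integral_mono_AE integrable_abs_powr_bounded) auto
  then show ?thesis
    unfolding Lp_norm_def using assms(1) by (intro powr_mono2) (auto intro: integral_nonneg_AE)
qed

lemma (in prob_space) integral_abs_powr_diff_le:
  fixes f g :: "'a \<Rightarrow> real"
  assumes q: "q \<ge> 1" and [measurable]: "f \<in> borel_measurable M" "g \<in> borel_measurable M"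
    and f: "AE x in M. \<bar>f x\<bar> \<le> R" and g: "AE x in M. \<bar>g x\<bar> \<le> R"
    and fg: "AE x in M. \<bar>f x - g x\<bar> \<le> \<delta>"
  shows "\<bar>(\<integral>x. \<bar>f x\<bar> powr q \<partial>M) - (\<integral>x. \<bar>g x\<bar> powr q \<partial>M)\<bar> \<le> q * R powr (q - 1) * \<delta>"
proof -
  define h where "h x = \<bar>f x\<bar> powr q - \<bar>g x\<bar> powr q" for x
  have int: "integrable M (\<lambda>x. \<bar>f x\<bar> powr q)" "integrable M (\<lambda>x. \<bar>g x\<bar> powr q)"
    using f g q by (auto intro!: integrable_abs_powr_bounded)
  have "integrable M h"
    using int unfolding h_def [abs_def] by simp
  moreover have "AE x in M. \<bar>h x\<bar> \<le> q * R powr (q - 1) * \<delta>"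
    using f g fg
  proof eventually_elim
    case (elim x)
    have "\<bar>h x\<bar> \<le> q * max \<bar>f x\<bar> \<bar>g x\<bar> powr (q - 1) * \<bar>\<bar>f x\<bar> - \<bar>g x\<bar>\<bar>"
      unfolding h_def using q by (intro abs_powr_diff_le) auto
    also have "\<dots> \<le> q * R powr (q - 1) * \<delta>"
      using q elim by (intro mult_mono powr_mono2) auto
    finally show ?case .
  qed
  ultimately have "integral\<^sup>L M h \<le> q * R powr (q - 1) * \<delta>" "- (q * R powr (q - 1) * \<delta>) \<le> integral\<^sup>L M h"
    by (auto intro!: integral_le_const integral_ge_const elim!: eventually_mono)
  moreover have "integral\<^sup>L M h = (\<integral>x. \<bar>f x\<bar> powr q \<partial>M) - (\<integral>x. \<bar>g x\<bar> powr q \<partial>M)"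
    using int unfolding h_def [abs_def] by simp
  ultimately show ?thesis by simp
qed

lemma (in prob_space) Lp_norm_perturbation:
  assumes q: "q \<ge> 1" and "\<epsilon> > 0"
  obtains \<delta> where "\<delta> > 0"
    and "\<And>f g. f \<in> borel_measurable M \<Longrightarrow> g \<in> borel_measurable M \<Longrightarrow> AE x in M. \<bar>g x\<bar> \<le> R \<Longrightarrow>
           AE x in M. \<bar>f x - g x\<bar> \<le> \<delta> \<Longrightarrow> \<bar>Lp_norm M q f - Lp_norm M q g\<bar> < \<epsilon>"
proof -
  define R' where "R' = max R 0 + 1"
  have "uniformly_continuous_on {0..R' powr q} (\<lambda>t. t powr (1/q))"
    using q by (intro compact_uniformly_continuous continuous_on_powr') (auto intro: continuous_intros)
  then obtain \<eta> where "\<eta> > 0" and \<eta>: "\<And>s t. s \<in> {0..R' powr q} \<Longrightarrow> t \<in> {0..R' powr q} \<Longrightarrow>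
      dist t s < \<eta> \<Longrightarrow> dist (t powr (1/q)) (s powr (1/q)) < \<epsilon>"
    unfolding uniformly_continuous_on_def using \<open>\<epsilon> > 0\<close> by metis
  define K where "K = q * R' powr (q - 1)"
  have K: "K > 0" unfolding K_def R'_def using q by simp
  define \<delta> where "\<delta> = min 1 (\<eta> / (2 * K))"
  have \<delta>: "\<delta> > 0" "\<delta> \<le> 1" "K * \<delta> < \<eta>"
    using K \<open>\<eta> > 0\<close> by (auto simp: \<delta>_def min_def field_simps)
  show thesis
  proof (rule that [OF \<delta>(1)])
    fix f g assume [measurable]: "f \<in> borel_measurable M" "g \<in> borel_measurable M"
      and g: "AE x in M. \<bar>g x\<bar> \<le> R" and fg: "AE x in M. \<bar>f x - g x\<bar> \<le> \<delta>"
    have "AE x in M. \<bar>f x\<bar> \<le> R'"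
      using g fg by eventually_elim (use \<delta>(2) in \<open>auto simp: R'_def\<close>)
    moreover have "AE x in M. \<bar>g x\<bar> \<le> R'"
      using g by eventually_elim (auto simp: R'_def)
    ultimately have bounds: "AE x in M. \<bar>f x\<bar> \<le> R'" "AE x in M. \<bar>g x\<bar> \<le> R'" .
    have "(\<integral>x. \<bar>h x\<bar> powr q \<partial>M) \<in> {0..R' powr q}"
      if [measurable]: "h \<in> borel_measurable M" and "AE x in M. \<bar>h x\<bar> \<le> R'" for h
      using that q by (auto intro!: integrable_abs_powr_bounded integral_nonneg_AE integral_le_const
          elim!: eventually_mono intro: powr_mono2)
    moreover have "\<bar>(\<integral>x. \<bar>f x\<bar> powr q \<partial>M) - (\<integral>x. \<bar>g x\<bar> powr q \<partial>M)\<bar> \<le> K * \<delta>"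
      unfolding K_def using bounds fg q by (intro integral_abs_powr_diff_le) auto
    ultimately show "\<bar>Lp_norm M q f - Lp_norm M q g\<bar> < \<epsilon>"
      using \<eta> bounds \<delta>(3) unfolding Lp_norm_def dist_real_def by simp
  qed
qed

lemma (in prob_space) tendsto_INF_Lp_norm_shift:
  assumes q: "q \<ge> 1"
    and g [measurable]: "g \<in> borel_measurable M" and g_bound: "AE x in M. \<bar>g x\<bar> \<le> R"
    and g_min: "\<And>c. Lp_norm M q g \<le> Lp_norm M q (\<lambda>x. c + g x)"
    and u [measurable]: "\<And>r. u r \<in> borel_measurable M"
    and u_g: "\<And>\<delta>. \<delta> > 0 \<Longrightarrow> \<forall>\<^sub>F r in F. AE x in M. \<bar>u r x - g x\<bar> \<le> \<delta>"
    and S: "\<forall>\<^sub>F r in F. 0 \<in> S r"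
  shows "((\<lambda>r. INF c\<in>S r. Lp_norm M q (\<lambda>x. c + u r x)) \<longlongrightarrow> Lp_norm M q g) F"
proof (rule tendstoI)
  fix \<epsilon> :: real assume "\<epsilon> > 0"
  define R0 where "R0 = max R 0"
  have g_R0: "AE x in M. \<bar>g x\<bar> \<le> R0"
    using g_bound by eventually_elim (simp add: R0_def)
  obtain \<delta>1 where "\<delta>1 > 0" and close1: "\<And>f h. f \<in> borel_measurable M \<Longrightarrow> h \<in> borel_measurable M \<Longrightarrow>
      AE x in M. \<bar>h x\<bar> \<le> R0 \<Longrightarrow> AE x in M. \<bar>f x - h x\<bar> \<le> \<delta>1 \<Longrightarrow>
      \<bar>Lp_norm M q f - Lp_norm M q h\<bar> < \<epsilon> / 2"
    using Lp_norm_perturbation [OF q, of "\<epsilon> / 2"] \<open>\<epsilon> > 0\<close> by auto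
  obtain \<delta>2 where "\<delta>2 > 0" and close2: "\<And>f h. f \<in> borel_measurable M \<Longrightarrow> h \<in> borel_measurable M \<Longrightarrow>
      AE x in M. \<bar>h x\<bar> \<le> 3 * R0 + 1 \<Longrightarrow> AE x in M. \<bar>f x - h x\<bar> \<le> \<delta>2 \<Longrightarrow>
      \<bar>Lp_norm M q f - Lp_norm M q h\<bar> < \<epsilon> / 2"
    using Lp_norm_perturbation [OF q, of "\<epsilon> / 2"] \<open>\<epsilon> > 0\<close> by auto
  define \<delta> where "\<delta> = min 1 (min \<delta>1 \<delta>2)"
  have "\<delta> > 0" using \<open>\<delta>1 > 0\<close> \<open>\<delta>2 > 0\<close> by (simp add: \<delta>_def)
  show "\<forall>\<^sub>F r in F. dist (INF c\<in>S r. Lp_norm M q (\<lambda>x. c + u r x)) (Lp_norm M q g) < \<epsilon>"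
    using u_g [OF \<open>\<delta> > 0\<close>] S
  proof eventually_elim
    case (elim r)
    have ug: "AE x in M. \<bar>(c + u r x) - (c + g x)\<bar> \<le> \<delta>" for c
      using elim(1) by simp
    have upper: "\<bar>Lp_norm M q (\<lambda>x. 0 + u r x) - Lp_norm M q g\<bar> < \<epsilon> / 2"
      by (rule close1) (use ug [of 0] g_R0 in \<open>auto simp: \<delta>_def elim!: eventually_mono\<close>)
    \<comment> \<open>Large shifts dominate \<open>g\<close> pointwise; the remaining ones form a bounded family.\<close>
    have lower: "Lp_norm M q g - \<epsilon> / 2 \<le> Lp_norm M q (\<lambda>x. c + u r x)" for c
    proof (cases "\<bar>c\<bar> \<le> 2 * R0 + 1")
      case True
      have "AE x in M. \<bar>c + g x\<bar> \<le> 3 * R0 + 1"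
        using g_R0 by eventually_elim (use True in simp)
      then have "\<bar>Lp_norm M q (\<lambda>x. c + u r x) - Lp_norm M q (\<lambda>x. c + g x)\<bar> < \<epsilon> / 2"
        using ug [of c] by (intro close2) (auto simp: \<delta>_def elim!: eventually_mono)
      then show ?thesis using g_min [of c] by linarith
    next
      case False
      have "AE x in M. \<bar>g x\<bar> \<le> \<bar>c + u r x\<bar> \<and> \<bar>c + u r x\<bar> \<le> \<bar>c\<bar> + R0 + 1"
        using g_R0 elim(1) by eventually_elim (use False in \<open>auto simp: \<delta>_def\<close>)
      then have "Lp_norm M q g \<le> Lp_norm M q (\<lambda>x. c + u r x)"
        using q by (intro Lp_norm_mono [where B = "\<bar>c\<bar> + R0 + 1"]) (auto elim!: eventually_mono)
      then show ?thesis using \<open>\<epsilon> > 0\<close> by linarith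
    qed
    have "Lp_norm M q g - \<epsilon> / 2 \<le> (INF c\<in>S r. Lp_norm M q (\<lambda>x. c + u r x))"
      using elim(2) lower by (intro cINF_greatest) auto
    moreover have "(INF c\<in>S r. Lp_norm M q (\<lambda>x. c + u r x)) \<le> Lp_norm M q (\<lambda>x. 0 + u r x)"
      using elim(2) by (intro cINF_lower bdd_belowI2 [where m = 0]) auto
    ultimately show ?case
      using upper \<open>\<epsilon> > 0\<close> unfolding dist_real_def by linarith
  qed
qed

lemma uniform_first_order_expansion:
  fixes f f' :: "real \<Rightarrow> 'a::metric_space \<Rightarrow> real"
  assumes "a > 0" "compact K" "\<delta> > 0"
    and deriv: "\<And>r t. r \<in> {0..a} \<Longrightarrow> t \<in> K \<Longrightarrow> ((\<lambda>r. f r t) has_real_derivative f' r t) (at r)"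
    and cont: "continuous_on ({0..a} \<times> K) (\<lambda>(r, t). f' r t)"
  shows "\<forall>\<^sub>F r in at_right 0. \<forall>t\<in>K. \<bar>f r t - f 0 t - r * f' 0 t\<bar> \<le> \<delta> * r"
proof -
  have "uniformly_continuous_on ({0..a} \<times> K) (\<lambda>(r, t). f' r t)"
    using assms(2) cont by (intro compact_uniformly_continuous compact_Times) auto
  then obtain d where "d > 0" and d: "\<And>x y. x \<in> {0..a} \<times> K \<Longrightarrow> y \<in> {0..a} \<times> K \<Longrightarrow>
      dist y x < d \<Longrightarrow> dist ((\<lambda>(r, t). f' r t) y) ((\<lambda>(r, t). f' r t) x) < \<delta>"
    unfolding uniformly_continuous_on_def using \<open>\<delta> > 0\<close> by metis
  have "\<forall>\<^sub>F r in at_right 0. 0 < r \<and> r < min a d"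
    using \<open>a > 0\<close> \<open>d > 0\<close> by (auto simp: eventually_at_right_field intro!: exI [of _ "min a d"])
  then show ?thesis
  proof eventually_elim
    case (elim r)
    show ?case
    proof
      fix t assume "t \<in> K"
      obtain z where z: "0 < z" "z < r" and mvt: "f r t - f 0 t = (r - 0) * f' z t"
        using MVT2 [of 0 r "\<lambda>r. f r t" "\<lambda>r. f' r t"] elim deriv \<open>t \<in> K\<close> by auto
      have "dist (f' z t) (f' 0 t) < \<delta>"
        using d [of "(0, t)" "(z, t)"] elim z \<open>t \<in> K\<close> by (auto simp: dist_Pair_Pair dist_real_def)
      then have "\<bar>f' z t - f' 0 t\<bar> * r \<le> \<delta> * r"
        using elim by (intro mult_right_mono) (auto simp: dist_real_def)
      moreover have "f r t - f 0 t - r * f' 0 t = (f' z t - f' 0 t) * r"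
        using mvt by (simp add: algebra_simps)
      ultimately show "\<bar>f r t - f 0 t - r * f' 0 t\<bar> \<le> \<delta> * r"
        using elim by (simp add: abs_mult)
    qed
  qed
qed

section \<open>The normalised surface measure\<close>

lemma sets_sphere_sigma [simp, measurable_cong]: "sets sphere_sigma = sets borel"
  and space_sphere_sigma [simp]: "space sphere_sigma = UNIV"
  by (simp_all add: sphere_sigma_def)

lemma measurable_sphere_sigma [simp]: "measurable sphere_sigma N = measurable borel N"
  by (rule measurable_cong_sets) simp_all

lemma prob_space_sphere_sigma: "prob_space (sphere_sigma :: (real^'n::finite) measure)"
proof -
  have "emeasure lborel (ball (0::real^'n) 1) = ennreal (unit_ball_vol (real CARD('n)))"
    by (simp add: emeasure_ball)
  then have "emeasure lborel (ball (0::real^'n) 1) \<noteq> 0" "emeasure lborel (ball (0::real^'n) 1) \<noteq> \<infinity>"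
    using unit_ball_vol_pos [of "real CARD('n)"] by (simp_all del: unit_ball_vol_pos)
  then show ?thesis
    unfolding sphere_sigma_def by (intro prob_space.prob_space_distr prob_space_uniform_measure) auto
qed

lemma AE_sphere_sigma_norm_eq_1: "AE \<eta> in (sphere_sigma :: (real^'n::finite) measure). norm \<eta> = 1"
proof -
  have "AE x in lborel. x \<noteq> (0::real^'n)"
    by (intro AE_I [of _ _ "{0}"] countable_imp_null_set_lborel) auto
  then have "AE x in uniform_measure lborel (ball (0::real^'n) 1). x \<noteq> 0"
    by (intro AE_uniform_measureI) auto
  then show ?thesis
    unfolding sphere_sigma_def by (subst AE_distr_iff) auto
qed

lemma distr_sphere_sigma_uminus:
  "distr sphere_sigma borel uminus = (sphere_sigma :: (real^'n::finite) measure)"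
proof -
  let ?U = "uniform_measure lborel (ball (0::real^'n) 1)"
  define g where "g x = indicator (ball 0 1) x / emeasure lborel (ball (0::real^'n) 1)" for x :: "real^'n"
  have [measurable]: "g \<in> borel_measurable borel"
    unfolding g_def [abs_def] by (intro borel_measurable_divide_ennreal borel_measurable_indicator) (auto simp: borel_open)
  have "distr ?U borel uminus = distr (density lborel (\<lambda>x. g (- x))) borel uminus"
    unfolding uniform_measure_def g_def by (simp add: indicator_def)
  also have "\<dots> = density (distr lborel borel uminus) g"
    by (subst density_distr) auto
  also have "distr lborel borel uminus = (lborel :: (real^'n) measure)"
    using lborel_affine [of "-1::real" "0::real^'n"] by (simp add: density_1)
  finally have U: "distr ?U borel uminus = ?U"
    by (simp add: uniform_measure_def g_def [abs_def])
  have "distr sphere_sigma borel uminus = distr ?U borel ((\<lambda>x. x /\<^sub>R norm x) \<circ> uminus)"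
    unfolding sphere_sigma_def by (subst distr_distr) (auto simp: comp_def)
  also have "\<dots> = distr (distr ?U borel uminus) borel (\<lambda>x. x /\<^sub>R norm x)"
    by (subst distr_distr) auto
  also have "\<dots> = sphere_sigma"
    unfolding U sphere_sigma_def ..
  finally show ?thesis .
qed

lemma integral_sphere_sigma_uminus:
  fixes f :: "real^'n::finite \<Rightarrow> real"
  assumes [measurable]: "f \<in> borel_measurable borel"
  shows "(\<integral>\<eta>. f (- \<eta>) \<partial>sphere_sigma) = (\<integral>\<eta>. f \<eta> \<partial>sphere_sigma)"
  by (subst (2) distr_sphere_sigma_uminus [symmetric]) (simp add: integral_distr)

lemma Lp_norm_sphere_sigma_odd_le_shift:
  fixes g :: "real^'n::finite \<Rightarrow> real"
  assumes q: "q \<ge> 1" and [measurable]: "g \<in> borel_measurable borel"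
    and odd: "\<And>\<eta>. g (- \<eta>) = - g \<eta>" and bounded: "AE \<eta> in sphere_sigma. \<bar>g \<eta>\<bar> \<le> R"
  shows "Lp_norm sphere_sigma q g \<le> Lp_norm sphere_sigma q (\<lambda>\<eta>. c + g \<eta>)"
proof -
  interpret prob_space "sphere_sigma :: (real^'n) measure"
    by (rule prob_space_sphere_sigma)
  define h where "h \<eta> = \<bar>c + g \<eta>\<bar> powr q" for \<eta>
  have [measurable]: "h \<in> borel_measurable borel"
    unfolding h_def [abs_def] by measurable
  have shift_bound: "AE \<eta> in sphere_sigma. \<bar>c + g \<eta>\<bar> \<le> \<bar>c\<bar> + R \<and> \<bar>c - g \<eta>\<bar> \<le> \<bar>c\<bar> + R"
    using bounded by eventually_elim auto
  have int: "integrable sphere_sigma h" "integrable sphere_sigma (\<lambda>\<eta>. h (- \<eta>))"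
    using shift_bound q unfolding h_def odd
    by (auto intro!: integrable_abs_powr_bounded [where B = "\<bar>c\<bar> + R"] elim!: eventually_mono)
  have "(\<integral>\<eta>. 2 * \<bar>g \<eta>\<bar> powr q \<partial>sphere_sigma) \<le> (\<integral>\<eta>. h \<eta> + h (- \<eta>) \<partial>sphere_sigma)"
  proof (intro integral_mono_AE AE_I2)
    show "integrable sphere_sigma (\<lambda>\<eta>. 2 * \<bar>g \<eta>\<bar> powr q)"
      using bounded q by (auto intro!: integrable_abs_powr_bounded)
    show "2 * \<bar>g \<eta>\<bar> powr q \<le> h \<eta> + h (- \<eta>)" for \<eta>
      using abs_half_diff_powr_le [OF q, of "c + g \<eta>" "c - g \<eta>"] by (simp add: h_def odd)
  qed (use int in auto)
  also have "\<dots> = 2 * (\<integral>\<eta>. h \<eta> \<partial>sphere_sigma)"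
    using int by (simp add: integral_sphere_sigma_uminus)
  finally have "(\<integral>\<eta>. \<bar>g \<eta>\<bar> powr q \<partial>sphere_sigma) \<le> (\<integral>\<eta>. h \<eta> \<partial>sphere_sigma)"
    by simp
  then show ?thesis
    unfolding Lp_norm_def h_def using q by (intro powr_mono2) (auto intro: integral_nonneg_AE)
qed

section \<open>Moments of a coordinate on the sphere\<close>

lemma nn_integral_even_Icc:
  fixes f :: "real \<Rightarrow> ennreal"
  assumes [measurable]: "f \<in> borel_measurable borel" and even: "\<And>x. f (- x) = f x"
  shows "(\<integral>\<^sup>+x. f x * indicator {-1..1} x \<partial>lborel) = 2 * (\<integral>\<^sup>+x. f x * indicator {0..1} x \<partial>lborel)"
proof -
  have "(\<integral>\<^sup>+x. f x * indicator {0..1} x \<partial>lborel) = (\<integral>\<^sup>+x. f x * indicator {-1..0} x \<partial>lborel)"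
    by (subst nn_integral_real_affine [of _ "-1" 0]) (auto simp: even indicator_def intro!: nn_integral_cong)
  then have "2 * (\<integral>\<^sup>+x. f x * indicator {0..1} x \<partial>lborel) =
      (\<integral>\<^sup>+x. f x * indicator {-1..0} x \<partial>lborel) + (\<integral>\<^sup>+x. f x * indicator {0..1} x \<partial>lborel)"
    by (simp add: mult_2)
  also have "\<dots> = (\<integral>\<^sup>+x. f x * (indicator {-1..0} x + indicator {0..1} x) \<partial>lborel)"
    by (subst nn_integral_add [symmetric]) (auto simp: distrib_left)
  also have "\<dots> = (\<integral>\<^sup>+x. f x * indicator {-1..1} x \<partial>lborel)"
    by (intro nn_integral_cong_AE AE_I [of _ _ "{0}"]) (auto simp: indicator_def)
  finally show ?thesis ..
qed

lemma nn_integral_abs_powr_sqrt_power_eq_Beta: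
  fixes q :: real assumes q: "q > 0"
  shows "(\<integral>\<^sup>+x. indicator {-1..1} x * (\<bar>x\<bar> powr q * sqrt (1 - x\<^sup>2) ^ n) \<partial>lborel) =
      ennreal (Beta ((q+1)/2) (real n / 2 + 1))"
proof -
  define f where "f x = ennreal (\<bar>x\<bar> powr q * (1 - x\<^sup>2) powr (real n / 2))" for x :: real
  have [measurable]: "f \<in> borel_measurable borel"
    unfolding f_def [abs_def] by measurable
  have pointwise: "ennreal (x\<^sup>2 powr ((q+1)/2 - 1) * (1 - x\<^sup>2) powr (real n / 2) * (2 * x) * indicator {0..1} x)
      = 2 * (f x * indicator {0..1} x)" if "x \<noteq> 0" for x :: real
  proof (cases "x \<in> {0..1}")
    case True
    with that have "x > 0" by auto
    have "x\<^sup>2 powr ((q+1)/2 - 1) = (x powr 2) powr ((q+1)/2 - 1)"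
      using \<open>x > 0\<close> by (simp add: powr_realpow)
    also have "\<dots> = x powr (2 * ((q+1)/2 - 1))"
      by (rule powr_powr)
    also have "2 * ((q+1)/2 - 1) = q - 1"
      by (simp add: field_simps)
    finally have "x\<^sup>2 powr ((q+1)/2 - 1) * (2 * x) = 2 * \<bar>x\<bar> powr q"
      using \<open>x > 0\<close> powr_add [of x "q - 1" 1] by simp
    then have "x\<^sup>2 powr ((q+1)/2 - 1) * (1 - x\<^sup>2) powr (real n / 2) * (2 * x) =
        2 * (\<bar>x\<bar> powr q * (1 - x\<^sup>2) powr (real n / 2))"
      by (metis mult.assoc mult.commute)
    moreover have "ennreal (2 * (\<bar>x\<bar> powr q * (1 - x\<^sup>2) powr (real n / 2))) =
        2 * ennreal (\<bar>x\<bar> powr q * (1 - x\<^sup>2) powr (real n / 2))"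
      by (simp add: ennreal_mult)
    ultimately show ?thesis
      using True by (simp only: f_def indicator_simps mult_1_right)
  qed simp
  have nonzero: "AE x in lborel. x \<noteq> (0::real)"
    by (intro AE_I [of _ _ "{0}"]) auto
  have "((\<lambda>t. t powr ((q+1)/2 - 1) * (1 - t) powr (real n / 2 + 1 - 1)) has_integral
          Beta ((q+1)/2) (real n / 2 + 1)) {0..1}"
    using has_integral_Beta_real [of "(q+1)/2" "n / 2 + 1"] q by simp
  from nn_integral_has_integral_lebesgue [OF _ this]
  have "ennreal (Beta ((q+1)/2) (real n / 2 + 1)) = (\<integral>\<^sup>+t. ennreal (t powr ((q+1)/2 - 1) *
      (1 - t) powr (real n / 2) * indicator {0^2..1^2} t) \<partial>lborel)"
    by (simp add: mult_ac ennreal_mult' ennreal_indicator)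
  also have "\<dots> = (\<integral>\<^sup>+x. ennreal (x\<^sup>2 powr ((q+1)/2 - 1) * (1 - x\<^sup>2) powr (real n / 2) * (2 * x) *
      indicator {0..1} x) \<partial>lborel)"
    by (subst nn_integral_substitution [where g = "\<lambda>x. x ^ 2" and g' = "\<lambda>x. 2 * x"])
       (auto intro!: derivative_eq_intros continuous_intros simp: set_borel_measurable_def)
  also have "\<dots> = (\<integral>\<^sup>+x. 2 * (f x * indicator {0..1} x) \<partial>lborel)"
    by (rule nn_integral_cong_AE [OF eventually_mono [OF nonzero pointwise]])
  also have "\<dots> = (\<integral>\<^sup>+x. f x * indicator {-1..1} x \<partial>lborel)"
    by (simp add: nn_integral_cmult nn_integral_even_Icc f_def)
  also have "\<dots> = (\<integral>\<^sup>+x. indicator {-1..1} x * (\<bar>x\<bar> powr q * sqrt (1 - x\<^sup>2) ^ n) \<partial>lborel)"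
    by (intro nn_integral_cong_AE AE_I [of _ _ "{1, -1}"])
       (auto simp: f_def powr_half_sqrt [symmetric] indicator_def abs_square_le_1
          abs_square_eq_1 powr_def exp_of_nat_mult [symmetric] emeasure_lborel_countable)
  finally show ?thesis ..
qed

lemma indicator_sum_squares_insert_le_1:
  fixes x :: "'a \<Rightarrow> real"
  assumes "finite A" "e \<notin> A" "x \<in> space (Pi\<^sub>M A (\<lambda>_. lborel))"
  shows "indicator ({f. sqrt (\<Sum>b\<in>insert e A. (f b)\<^sup>2) \<le> 1} \<inter> space (Pi\<^sub>M (insert e A) (\<lambda>_. lborel))) (x(e := y)) =
    (indicator {-1..1} y * indicator ({f. sqrt (\<Sum>b\<in>A. (f b)\<^sup>2) \<le> sqrt (1 - y\<^sup>2)} \<inter> space (Pi\<^sub>M A (\<lambda>_. lborel))) x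
      :: ennreal)"
proof -
  define s where "s = (\<Sum>b\<in>A. (x b)\<^sup>2)"
  have "s \<ge> 0" unfolding s_def by (simp add: sum_nonneg)
  have "(\<Sum>b\<in>insert e A. ((x(e:=y)) b)\<^sup>2) = y\<^sup>2 + s"
    using assms unfolding s_def by (subst sum.insert) (auto intro!: sum.cong)
  moreover have "(y\<^sup>2 + s \<le> 1) \<longleftrightarrow> (y \<in> {-1..1} \<and> s \<le> 1 - y\<^sup>2)"
    using \<open>s \<ge> 0\<close> abs_square_le_1 [of y] by (auto simp: abs_le_iff)
  ultimately show ?thesis
    using assms(3) by (auto simp: indicator_def s_def [symmetric] space_PiM PiE_def)
qed

lemma nn_integral_cball_component:
  fixes h :: "real \<Rightarrow> ennreal" and i :: "'n::finite"
  assumes [measurable]: "h \<in> borel_measurable borel"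
  shows "(\<integral>\<^sup>+x. indicator (cball 0 1) x * h (x$i) \<partial>(lborel::(real^'n) measure)) =
    ennreal (unit_ball_vol (real (CARD('n) - 1))) *
      (\<integral>\<^sup>+y. indicator {-1..1} y * ennreal (sqrt (1 - y\<^sup>2) ^ (CARD('n) - 1)) * h y \<partial>lborel)"
proof -
  define e :: "real^'n" where "e = axis i 1"
  define A where "A = (Basis :: (real^'n) set) - {e}"
  have eB: "e \<in> Basis" unfolding e_def by (simp add: Basis_vec_def) blast
  have BA: "Basis = insert e A" "e \<notin> A" "finite A" using eB by (auto simp: A_def)
  have cardA: "card A = CARD('n) - 1" using eB by (simp add: A_def card_Diff_singleton)
  interpret product_sigma_finite "\<lambda>_. lborel :: real measure" by standard
  let ?S = "\<lambda>f. (\<Sum>b\<in>Basis. f b *\<^sub>R b :: real^'n)"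
  let ?ball = "\<lambda>A r. {f. sqrt (\<Sum>b\<in>A. (f b)\<^sup>2) \<le> r} \<inter> space (Pi\<^sub>M A (\<lambda>_. lborel))"
  have [measurable]: "(\<lambda>x::real^'n. x $ i) \<in> borel_measurable borel" "cball (0::real^'n) 1 \<in> sets borel"
    by (simp_all add: borel_closed)
  have norm_S: "norm (?S f) = sqrt (\<Sum>b\<in>Basis. (f b)\<^sup>2)" for f
    by (subst euclidean_dist_l2 [of 0, simplified])
       (simp add: L2_set_def inner_sum_left inner_Basis if_distrib sum.delta cong: if_cong)
  have "(\<integral>\<^sup>+x. indicator (cball 0 1) x * h (x$i) \<partial>(lborel::(real^'n) measure))
      = (\<integral>\<^sup>+f. indicator (?ball (insert e A) 1) f * h (f e) \<partial>(Pi\<^sub>M (insert e A) (\<lambda>_. lborel)))"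
    unfolding BA(1) [symmetric]
    by (subst lborel_eq, simp add: nn_integral_distr, intro nn_integral_cong)
       (simp add: indicator_def norm_S cart_eq_inner_axis [of _ i] e_def [symmetric] inner_sum_left
         inner_Basis eB if_distrib sum.delta space_PiM cong: if_cong)
  also have "\<dots> = (\<integral>\<^sup>+y. \<integral>\<^sup>+x. indicator (?ball (insert e A) 1) (x(e := y)) * h y
      \<partial>Pi\<^sub>M A (\<lambda>_. lborel) \<partial>lborel)"
    by (subst product_nn_integral_insert_rev [OF BA(3) BA(2)]) auto
  also have "\<dots> = (\<integral>\<^sup>+y. indicator {-1..1} y * h y * emeasure (Pi\<^sub>M A (\<lambda>_. lborel)) (?ball A (sqrt (1 - y\<^sup>2)))
      \<partial>lborel)"
  proof (intro nn_integral_cong)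
    fix y :: real
    have "(\<integral>\<^sup>+x. indicator (?ball (insert e A) 1) (x(e := y)) * h y \<partial>Pi\<^sub>M A (\<lambda>_. lborel)) =
        (\<integral>\<^sup>+x. (indicator {-1..1} y * h y) * indicator (?ball A (sqrt (1 - y\<^sup>2))) x \<partial>Pi\<^sub>M A (\<lambda>_. lborel))"
      by (intro nn_integral_cong) (simp only: indicator_sum_squares_insert_le_1 [OF BA(3) BA(2)] mult_ac)
    also have "\<dots> = indicator {-1..1} y * h y * emeasure (Pi\<^sub>M A (\<lambda>_. lborel)) (?ball A (sqrt (1 - y\<^sup>2)))"
      using BA(2,3) by (subst nn_integral_cmult_indicator) auto
    finally show "(\<integral>\<^sup>+x. indicator (?ball (insert e A) 1) (x(e := y)) * h y \<partial>Pi\<^sub>M A (\<lambda>_. lborel)) =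
        indicator {-1..1} y * h y * emeasure (Pi\<^sub>M A (\<lambda>_. lborel)) (?ball A (sqrt (1 - y\<^sup>2)))" .
  qed
  also have "\<dots> = (\<integral>\<^sup>+y. ennreal (unit_ball_vol (real (card A))) *
      (indicator {-1..1} y * ennreal (sqrt (1 - y\<^sup>2) ^ card A) * h y) \<partial>lborel)"
  proof (intro nn_integral_cong_AE)
    have "AE y in lborel. y \<notin> {-1, 1::real}"
      by (intro AE_not_in countable_imp_null_set_lborel) auto
    then show "AE y in lborel. indicator {-1..1} y * h y * emeasure (Pi\<^sub>M A (\<lambda>_. lborel)) (?ball A (sqrt (1 - y\<^sup>2)))
        = ennreal (unit_ball_vol (real (card A))) * (indicator {-1..1} y * ennreal (sqrt (1 - y\<^sup>2) ^ card A) * h y)"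
    proof eventually_elim
      case (elim y)
      show ?case
      proof (cases "y \<in> {-1<..<1}")
        case True
        then have "y\<^sup>2 < 1" by (auto simp: abs_square_less_1)
        then show ?thesis
          using BA by (subst emeasure_cball_aux) (auto simp: ennreal_mult' mult_ac)
      qed (use elim in auto)
    qed
  qed
  finally show ?thesis
    using cardA by (simp add: nn_integral_cmult)
qed

lemma nn_integral_cball_abs_component_powr:
  fixes i :: "'n::finite" and q :: real
  assumes q: "q > 0"
  shows "(\<integral>\<^sup>+x. indicator (cball 0 1) x * ennreal (\<bar>x$i\<bar> powr q) \<partial>(lborel::(real^'n) measure)) =
     ennreal (unit_ball_vol (real (CARD('n) - 1)) * Beta ((q+1)/2) (real (CARD('n) - 1) / 2 + 1))"
proof -
  have "(\<integral>\<^sup>+x. indicator (cball 0 1) x * ennreal (\<bar>x$i\<bar> powr q) \<partial>(lborel::(real^'n) measure)) =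
      ennreal (unit_ball_vol (real (CARD('n) - 1))) *
      (\<integral>\<^sup>+y. indicator {-1..1} y * ennreal (sqrt (1 - y\<^sup>2) ^ (CARD('n) - 1)) * ennreal (\<bar>y\<bar> powr q) \<partial>lborel)"
    by (rule nn_integral_cball_component) simp
  also have "(\<integral>\<^sup>+y. indicator {-1..1} y * ennreal (sqrt (1 - y\<^sup>2) ^ (CARD('n) - 1)) * ennreal (\<bar>y\<bar> powr q) \<partial>lborel) =
      (\<integral>\<^sup>+y. indicator {-1..1} y * (\<bar>y\<bar> powr q * sqrt (1 - y\<^sup>2) ^ (CARD('n) - 1)) \<partial>lborel)"
    by (intro nn_integral_cong) (simp add: ennreal_mult' ennreal_indicator mult_ac)
  also have "\<dots> = ennreal (Beta ((q+1)/2) (real (CARD('n) - 1) / 2 + 1))"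
    by (rule nn_integral_abs_powr_sqrt_power_eq_Beta [OF q])
  finally show ?thesis
    by (simp add: ennreal_mult')
qed

lemma nn_integral_lborel_divide_scaleR:
  fixes f :: "'a::euclidean_space \<Rightarrow> ennreal"
  assumes [measurable]: "f \<in> borel_measurable borel" and s: "s > 0"
  shows "(\<integral>\<^sup>+x. f (x /\<^sub>R s) \<partial>lborel) = ennreal (s ^ DIM('a)) * (\<integral>\<^sup>+x. f x \<partial>lborel)"
proof -
  have "(\<integral>\<^sup>+x. f (x /\<^sub>R s) \<partial>lborel) =
      (\<integral>\<^sup>+x. f (x /\<^sub>R s) \<partial>density (distr lborel borel (\<lambda>x. 0 + s *\<^sub>R x)) (\<lambda>_. \<bar>s\<bar> ^ DIM('a)))"
    using s by (subst lborel_affine [of s 0]) auto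
  also have "\<dots> = ennreal (s ^ DIM('a)) * (\<integral>\<^sup>+x. f x \<partial>lborel)"
    using s by (simp add: nn_integral_density nn_integral_distr nn_integral_cmult)
  finally show ?thesis .
qed

lemma nn_integral_ball_radial_dilation:
  fixes g :: "real^'n::finite \<Rightarrow> ennreal"
  assumes [measurable]: "g \<in> borel_measurable borel" and s: "s > 0"
  shows "(\<integral>\<^sup>+x. indicator (ball 0 s) x * g (x /\<^sub>R norm x) \<partial>lborel) =
    ennreal (s ^ CARD('n)) * (\<integral>\<^sup>+x. indicator (ball 0 1) x * g (x /\<^sub>R norm x) \<partial>lborel)"
proof -
  have [measurable]: "ball (0::real^'n) 1 \<in> sets borel"
    by (simp add: borel_open)
  have proj: "(x /\<^sub>R s) /\<^sub>R norm (x /\<^sub>R s) = x /\<^sub>R norm x" for x :: "real^'n"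
    using s by (cases "x = 0") (simp_all add: field_simps)
  have ball: "x /\<^sub>R s \<in> ball 0 1 \<longleftrightarrow> x \<in> ball 0 s" for x :: "real^'n"
    using s by (simp add: field_simps)
  have "(\<integral>\<^sup>+x. indicator (ball 0 s) x * g (x /\<^sub>R norm x) \<partial>lborel) =
      (\<integral>\<^sup>+x. indicator (ball 0 1) (x /\<^sub>R s) * g ((x /\<^sub>R s) /\<^sub>R norm (x /\<^sub>R s)) \<partial>lborel)"
    by (simp only: indicator_def proj ball)
  also have "\<dots> = ennreal (s ^ CARD('n)) * (\<integral>\<^sup>+x. indicator (ball 0 1) x * g (x /\<^sub>R norm x) \<partial>lborel)"
    using s by (subst nn_integral_lborel_divide_scaleR) auto
  finally show ?thesis .
qed

lemma less_powr_inverse_iff: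
  fixes a t q :: real
  assumes "q > 0" "a \<ge> 0" "t \<ge> 0"
  shows "a < t powr (1/q) \<longleftrightarrow> a powr q < t"
proof
  assume "a < t powr (1/q)"
  then have "a powr q < (t powr (1/q)) powr q"
    using assms by (intro powr_less_mono2) auto
  then show "a powr q < t"
    using assms by (simp add: powr_powr)
next
  assume "a powr q < t"
  then have "(a powr q) powr (1/q) < t powr (1/q)"
    using assms by (intro powr_less_mono2) auto
  then show "a < t powr (1/q)"
    using assms by (simp add: powr_powr)
qed

lemma nn_integral_powr_Icc_0_1:
  fixes a :: real
  assumes "a \<ge> 0"
  shows "(\<integral>\<^sup>+t. ennreal (t powr a) * indicator {0..1} t \<partial>lborel) = ennreal (1 / (a + 1))"
proof -
  have "((\<lambda>t. t powr a) has_integral (1 powr (a + 1) / (a + 1))) {0..1}"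
    using assms by (intro has_integral_powr_from_0) auto
  from nn_integral_has_integral_lebesgue' [OF _ this] show ?thesis
    by simp
qed

lemma nn_integral_ball_one_minus_norm_powr_radial:
  fixes g :: "real^'n::finite \<Rightarrow> ennreal" and q :: real
  assumes [measurable]: "g \<in> borel_measurable borel" and q: "q > 0"
  shows "(\<integral>\<^sup>+x. indicator (ball 0 1) x * ennreal (1 - norm x powr q) * g (x /\<^sub>R norm x) \<partial>lborel) =
    ennreal (q / (CARD('n) + q)) * (\<integral>\<^sup>+x. indicator (ball 0 1) x * g (x /\<^sub>R norm x) \<partial>lborel)"
proof -
  define K where "K = (\<integral>\<^sup>+x. indicator (ball 0 1) x * g (x /\<^sub>R norm x) \<partial>(lborel::(real^'n) measure))"
  define F where "F x t = indicator {0..1} t *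
    indicator {p::(real^'n) \<times> real. norm (fst p) < snd p powr (1/q)} (x, t) * g (x /\<^sub>R norm x)" for x t
  have Fm: "case_prod F \<in> borel_measurable (lborel \<Otimes>\<^sub>M lborel)"
    unfolding F_def by measurable
  \<comment> \<open>Layer cake: \<open>1 - |x|^q\<close> is the length of \<open>{t \<in> [0,1]. |x| < t^(1/q)}\<close>, and after Fubini
      the ball of radius \<open>t^(1/q)\<close> contributes \<open>t^(n/q)\<close> times the unit ball.\<close>
  have inner: "indicator (ball 0 1) x * ennreal (1 - norm x powr q) * g (x /\<^sub>R norm x) = (\<integral>\<^sup>+t. F x t \<partial>lborel)"
    for x :: "real^'n"
  proof -
    have "(\<integral>\<^sup>+t. F x t \<partial>lborel) = (\<integral>\<^sup>+t. g (x /\<^sub>R norm x) * indicator {norm x powr q <.. 1} t \<partial>lborel)"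
      using powr_ge_zero [of "norm x" q]
      by (intro nn_integral_cong) (auto simp: F_def indicator_def less_powr_inverse_iff [OF q] simp del: powr_ge_zero)
    also have "\<dots> = g (x /\<^sub>R norm x) * emeasure lborel {norm x powr q <.. 1}"
      by (subst nn_integral_cmult_indicator) auto
    also have "\<dots> = indicator (ball 0 1) x * ennreal (1 - norm x powr q) * g (x /\<^sub>R norm x)"
    proof (cases "x \<in> ball 0 1")
      case True
      then have "norm x powr q \<le> 1" using q by (simp add: powr_le1)
      then show ?thesis using True by (simp add: mult.commute)
    next
      case False
      then have "norm x powr q \<ge> 1" using q by (simp add: ge_one_powr_ge_zero)
      then show ?thesis using False by simp
    qed
    finally show ?thesis by simp
  qed
  have slice: "(\<integral>\<^sup>+x. F x t \<partial>lborel) = K * (ennreal (t powr (CARD('n) / q)) * indicator {0..1} t)"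
    if "t \<noteq> 0" for t
  proof (cases "t \<in> {0..1}")
    case True
    with that have "t > 0" by auto
    have "(\<integral>\<^sup>+x. F x t \<partial>lborel) = (\<integral>\<^sup>+x. indicator (ball 0 (t powr (1/q))) x * g (x /\<^sub>R norm x) \<partial>lborel)"
      using True by (intro nn_integral_cong) (simp add: F_def indicator_def)
    also have "\<dots> = ennreal ((t powr (1/q)) ^ CARD('n)) * K"
      unfolding K_def using \<open>t > 0\<close> by (intro nn_integral_ball_radial_dilation) auto
    also have "(t powr (1/q)) ^ CARD('n) = t powr (CARD('n) / q)"
      using \<open>t > 0\<close> by (simp add: powr_realpow [symmetric] powr_powr)
    finally show ?thesis using True by (simp add: mult.commute)
  qed (simp add: F_def)
  have "(\<integral>\<^sup>+x. indicator (ball 0 1) x * ennreal (1 - norm x powr q) * g (x /\<^sub>R norm x) \<partial>lborel)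
      = (\<integral>\<^sup>+t. \<integral>\<^sup>+x. F x t \<partial>lborel \<partial>lborel)"
    unfolding inner by (rule lborel_pair.Fubini' [symmetric, OF Fm])
  also have "\<dots> = (\<integral>\<^sup>+t. K * (ennreal (t powr (CARD('n) / q)) * indicator {0..1} t) \<partial>lborel)"
    by (intro nn_integral_cong_AE AE_I [of _ _ "{0}"]) (use slice in auto)
  also have "\<dots> = K * (\<integral>\<^sup>+t. ennreal (t powr (CARD('n) / q)) * indicator {0..1} t \<partial>lborel)"
    by (subst nn_integral_cmult) auto
  also have "(\<integral>\<^sup>+t. ennreal (t powr (CARD('n) / q)) * indicator {0..1} t \<partial>lborel) = ennreal (q / (CARD('n) + q))"
    using q by (subst nn_integral_powr_Icc_0_1) (auto simp: field_simps)
  finally show ?thesis unfolding K_def by (simp add: mult.commute)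
qed

lemma nn_integral_ball_norm_powr_radial:
  fixes g :: "real^'n::finite \<Rightarrow> ennreal" and q :: real
  assumes [measurable]: "g \<in> borel_measurable borel" and q: "q > 0"
    and finite: "(\<integral>\<^sup>+x. indicator (ball 0 1) x * g (x /\<^sub>R norm x) \<partial>lborel) < \<infinity>"
  shows "(\<integral>\<^sup>+x. indicator (ball 0 1) x * ennreal (norm x powr q) * g (x /\<^sub>R norm x) \<partial>lborel) =
    ennreal (CARD('n) / (CARD('n) + q)) * (\<integral>\<^sup>+x. indicator (ball 0 1) x * g (x /\<^sub>R norm x) \<partial>lborel)"
proof -
  define K where "K = (\<integral>\<^sup>+x. indicator (ball 0 1) x * g (x /\<^sub>R norm x) \<partial>(lborel::(real^'n) measure))"
  define I where "I = (\<integral>\<^sup>+x. indicator (ball 0 1) x * ennreal (norm x powr q) * g (x /\<^sub>R norm x) \<partial>(lborel::(real^'n) measure))"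
  have [measurable]: "ball (0::real^'n) 1 \<in> sets borel"
    by (simp add: borel_open)
  have powr_le_1: "norm x powr q \<le> 1" if "x \<in> ball (0::real^'n) 1" for x
    using that q by (simp add: powr_le1)
  have "I + ennreal (q / (CARD('n) + q)) * K =
      (\<integral>\<^sup>+x. indicator (ball 0 1) x * ennreal (norm x powr q) * g (x /\<^sub>R norm x) +
        indicator (ball 0 1) x * ennreal (1 - norm x powr q) * g (x /\<^sub>R norm x) \<partial>lborel)"
    unfolding I_def K_def nn_integral_ball_one_minus_norm_powr_radial [OF assms(1) q, symmetric]
    by (rule nn_integral_add [symmetric]) auto
  also have "\<dots> = K"
    unfolding K_def
  proof (intro nn_integral_cong)
    fix x :: "real^'n"
    show "indicator (ball 0 1) x * ennreal (norm x powr q) * g (x /\<^sub>R norm x) +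
        indicator (ball 0 1) x * ennreal (1 - norm x powr q) * g (x /\<^sub>R norm x) =
        indicator (ball 0 1) x * g (x /\<^sub>R norm x)"
      using powr_le_1 [of x]
      by (cases "x \<in> ball 0 1") (simp_all flip: distrib_right ennreal_plus)
  qed
  finally have sum: "I + ennreal (q / (CARD('n) + q)) * K = K" .
  have "I \<le> K"
    unfolding I_def K_def
  proof (intro nn_integral_mono)
    fix x :: "real^'n"
    have "ennreal (norm x powr q) * g (x /\<^sub>R norm x) \<le> 1 * g (x /\<^sub>R norm x)" if "x \<in> ball 0 1"
      using powr_le_1 [OF that] by (intro mult_right_mono) auto
    then show "indicator (ball 0 1) x * ennreal (norm x powr q) * g (x /\<^sub>R norm x) \<le>
        indicator (ball 0 1) x * g (x /\<^sub>R norm x)"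
      by (cases "x \<in> ball 0 1") (simp_all add: mult.assoc)
  qed
  moreover have "K < \<infinity>"
    using finite unfolding K_def .
  ultimately have "I < \<infinity>"
    by (rule le_less_trans)
  with \<open>K < \<infinity>\<close> obtain k a where K: "K = ennreal k" "k \<ge> 0" and I: "I = ennreal a" "a \<ge> 0"
    by (auto simp: less_top_ennreal)
  have "a + q / (CARD('n) + q) * k = k"
    using sum q K I by (simp add: ennreal_mult' [symmetric] ennreal_plus [symmetric] del: ennreal_plus)
  then have "a = CARD('n) / (CARD('n) + q) * k"
    using q by (simp add: field_simps)
  moreover have "ennreal (CARD('n) / (CARD('n) + q) * k) = ennreal (CARD('n) / (CARD('n) + q)) * ennreal k"
    using q K(2) by (intro ennreal_mult) auto
  ultimately show ?thesis
    using I K by (simp add: I_def K_def)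
qed

lemma unit_ball_vol_Beta_quotient:
  fixes n q :: real assumes n: "n \<ge> 1" and q: "q > 0"
  shows "unit_ball_vol (n - 1) * Beta ((q+1)/2) ((n - 1)/2 + 1) * ((n + q) / n) / unit_ball_vol n
     = Gamma (n/2) * Gamma ((1+q)/2) / (sqrt pi * Gamma ((n+q)/2))"
proof -
  have G: "Gamma ((n+q)/2 + 1) = (n+q)/2 * Gamma ((n+q)/2)"
    using Gamma_plus1 [of "(n+q)/2"] nonpos_Ints_nonpos [of "(n+q)/2"] n q by force
  have arg: "(q+1)/2 + ((n - 1)/2 + 1) = (n+q)/2 + 1" "(n - 1)/2 + 1 = (n+1)/2"
    by (simp_all add: field_simps)
  have B: "Beta ((q+1)/2) ((n - 1)/2 + 1) =
      Gamma ((q+1)/2) * Gamma ((n+1)/2) / ((n+q)/2 * Gamma ((n+q)/2))"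
    unfolding Beta_def arg(1) G by (simp only: arg(2))
  have pi: "pi powr ((n - 1)/2) = pi powr (n/2) / sqrt pi"
    by (simp add: powr_diff [symmetric] powr_half_sqrt [symmetric] diff_divide_distrib)
  have V1: "unit_ball_vol (n - 1) = pi powr (n/2) / sqrt pi / Gamma ((n+1)/2)"
    unfolding unit_ball_vol_def pi arg(2) ..
  have G': "Gamma (n/2 + 1) = n/2 * Gamma (n/2)"
    using Gamma_plus1 [of "n/2"] nonpos_Ints_nonpos [of "n/2"] n by force
  have V: "unit_ball_vol n = pi powr (n/2) / (n/2 * Gamma (n/2))"
    unfolding unit_ball_vol_def G' ..
  have cancel: "P / S / d * (b * d / (m/2 * c)) * (m/k) / (P / (k/2 * a)) = a * b / (S * c)"
    if "P > 0" "S > 0" "d > 0" "c > 0" "a > 0" "k > 0" "m > 0" for P S d c a b k m :: real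
    using that by (simp add: field_simps)
  have Gamma_pos: "Gamma ((n+q)/2) > 0" "Gamma (n/2) > 0" "Gamma ((n+1)/2) > 0"
    using n q by (auto intro!: Gamma_real_pos)
  show ?thesis
    unfolding V1 V B add.commute [of 1 q]
    by (rule cancel) (use n q Gamma_pos in simp_all)
qed

lemma nn_integral_sphere_sigma:
  fixes h :: "real^'n::finite \<Rightarrow> ennreal"
  assumes [measurable]: "h \<in> borel_measurable borel"
  shows "(\<integral>\<^sup>+\<eta>. h \<eta> \<partial>sphere_sigma) =
    (\<integral>\<^sup>+x. indicator (ball 0 1) x * h (x /\<^sub>R norm x) \<partial>lborel) / ennreal (unit_ball_vol CARD('n))"
  unfolding sphere_sigma_def
  by (simp add: nn_integral_distr nn_integral_uniform_measure emeasure_ball borel_open mult.commute)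

lemma Beta_pos:
  fixes a b :: real
  assumes "a > 0" "b > 0"
  shows "Beta a b > 0"
  using assms unfolding Beta_def by (intro divide_pos_pos mult_pos_pos Gamma_real_pos) auto

lemma nn_integral_ball_abs_component_powr_radial:
  fixes i :: "'n::finite" and q :: real
  assumes q: "q > 0"
  defines "n \<equiv> real CARD('n)"
  shows "(\<integral>\<^sup>+x. indicator (ball 0 1) x * ennreal (\<bar>(x /\<^sub>R norm x)$i\<bar> powr q) \<partial>lborel) =
    ennreal ((n + q) / n * unit_ball_vol (n - 1) * Beta ((q+1)/2) ((n - 1)/2 + 1))"
proof -
  let ?B = "ball (0::real^'n) 1"
  define h where "h \<eta> = ennreal (\<bar>\<eta>$i\<bar> powr q)" for \<eta> :: "real^'n"
  define K where "K = (\<integral>\<^sup>+x. indicator ?B x * h (x /\<^sub>R norm x) \<partial>lborel)"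
  define W where "W = unit_ball_vol (n - 1) * Beta ((q+1)/2) ((n - 1)/2 + 1)"
  have [measurable]: "h \<in> borel_measurable borel" "?B \<in> sets borel"
    by (simp_all add: h_def [abs_def] borel_open cart_eq_inner_axis)
  have n: "n \<ge> 1" "real (CARD('n) - 1) = n - 1"
    by (simp_all add: n_def of_nat_diff)
  have "K \<le> (\<integral>\<^sup>+x. indicator ?B x \<partial>lborel)"
  proof (unfold K_def, intro nn_integral_mono)
    fix x :: "real^'n"
    have "\<bar>(x /\<^sub>R norm x)$i\<bar> \<le> 1"
      using component_le_norm_cart [of "x /\<^sub>R norm x" i] by (cases "x = 0") auto
    then have "h (x /\<^sub>R norm x) \<le> 1"
      using q by (simp add: h_def powr_le1)
    then show "indicator ?B x * h (x /\<^sub>R norm x) \<le> indicator ?B x"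
      by (cases "x \<in> ?B") auto
  qed
  then have "K < \<infinity>"
    by (simp add: emeasure_ball le_less_trans [OF _ ennreal_less_top])
  then obtain k where k: "K = ennreal k" "k \<ge> 0"
    by (auto simp: less_top_ennreal)
  have radial: "ennreal (norm x powr q) * h (x /\<^sub>R norm x) = ennreal (\<bar>x$i\<bar> powr q)" for x :: "real^'n"
    by (cases "x = 0") (simp_all add: h_def ennreal_mult' [symmetric] abs_mult powr_mult powr_divide field_simps)
  have "sphere (0::real^'n) 1 \<in> null_sets lborel"
    using negligible_sphere [of "0::real^'n" 1]
    by (auto simp: null_sets_completion_iff negligible_iff_null_sets negligible_convex_frontier)
  then have "(\<integral>\<^sup>+x. indicator ?B x * ennreal (norm x powr q) * h (x /\<^sub>R norm x) \<partial>lborel) =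
      (\<integral>\<^sup>+x. indicator (cball 0 1) x * ennreal (\<bar>x$i\<bar> powr q) \<partial>lborel)"
    by (intro nn_integral_cong_AE, rule AE_not_in [THEN eventually_mono])
      (auto simp: indicator_def radial mult.assoc)
  also have "\<dots> = ennreal W"
    using nn_integral_cball_abs_component_powr [OF q, of i] by (simp add: W_def n(2) n_def [symmetric])
  finally have "ennreal W = ennreal (n / (n + q)) * K"
    unfolding K_def n_def using \<open>K < \<infinity>\<close> q
    by (subst (asm) nn_integral_ball_norm_powr_radial) (auto simp: K_def)
  also have "\<dots> = ennreal (n / (n + q) * k)"
    unfolding k(1) using k(2) q n(1) by (intro ennreal_mult [symmetric]) auto
  moreover have "(n - 1)/2 + 1 > 0"
    using n(1) by (simp add: field_simps)
  then have "W \<ge> 0"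
    unfolding W_def using n(1) q by (intro mult_nonneg_nonneg less_imp_le [OF Beta_pos]) auto
  ultimately have "k = (n + q) / n * W"
    using n(1) q k(2) by (simp add: field_simps)
  then show ?thesis
    using k by (simp add: K_def h_def W_def mult.assoc)
qed

lemma integral_sphere_sigma_abs_component_powr:
  fixes i :: "'n::finite" and q :: real
  assumes q: "q > 0"
  defines "n \<equiv> real CARD('n)"
  shows "(\<integral>\<eta>. \<bar>\<eta>$i\<bar> powr q \<partial>(sphere_sigma :: (real^'n) measure)) =
    Gamma (n/2) * Gamma ((1+q)/2) / (sqrt pi * Gamma ((n+q)/2))"
proof -
  have n: "n \<ge> 1" "unit_ball_vol n > 0"
    by (simp_all add: n_def)
  have "(n - 1)/2 + 1 > 0"
    using n(1) by (simp add: field_simps)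
  then have W_nonneg: "(n + q) / n * unit_ball_vol (n - 1) * Beta ((q+1)/2) ((n - 1)/2 + 1) \<ge> 0"
    using n(1) q by (intro mult_nonneg_nonneg less_imp_le [OF Beta_pos]) auto
  have measurable_abs_component_powr: "(\<lambda>\<eta>::real^'n. ennreal (\<bar>\<eta>$i\<bar> powr q)) \<in> borel_measurable borel"
    by (simp add: cart_eq_inner_axis)
  have "(\<integral>\<eta>. \<bar>\<eta>$i\<bar> powr q \<partial>(sphere_sigma :: (real^'n) measure)) =
      enn2real (\<integral>\<^sup>+\<eta>. ennreal (\<bar>\<eta>$i\<bar> powr q) \<partial>sphere_sigma)"
    by (rule integral_eq_nn_integral) (auto simp: cart_eq_inner_axis)
  also have "\<dots> = enn2real (ennreal ((n + q) / n * unit_ball_vol (n - 1) * Beta ((q+1)/2) ((n - 1)/2 + 1)) /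
      ennreal (unit_ball_vol n))"
    unfolding n_def
    by (simp only: nn_integral_sphere_sigma [OF measurable_abs_component_powr]
        nn_integral_ball_abs_component_powr_radial [OF q])
  also have "\<dots> = (n + q) / n * unit_ball_vol (n - 1) * Beta ((q+1)/2) ((n - 1)/2 + 1) / unit_ball_vol n"
    using n(2) W_nonneg divide_nonneg_pos [OF W_nonneg n(2)] by (simp only: divide_ennreal enn2real_ennreal)
  also have "\<dots> = Gamma (n/2) * Gamma ((1+q)/2) / (sqrt pi * Gamma ((n+q)/2))"
    using unit_ball_vol_Beta_quotient [OF n(1) q] by (simp add: mult_ac)
  finally show ?thesis .
qed

lemma Lp_norm_sphere_sigma_component:
  fixes i :: "'n::finite" and q :: real
  assumes "q > 0"
  shows "Lp_norm (sphere_sigma :: (real^'n) measure) q (\<lambda>\<eta>. \<eta>$i) =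
    (Gamma (CARD('n)/2) * Gamma ((1+q)/2) / (sqrt pi * Gamma ((CARD('n)+q)/2))) powr (1/q)"
  unfolding Lp_norm_def using assms by (simp add: integral_sphere_sigma_abs_component_powr)

section \<open>The kernel along an axis\<close>

definition kernel_profile :: "real \<Rightarrow> real \<Rightarrow> real \<Rightarrow> real \<Rightarrow> real" where
  "kernel_profile \<gamma> \<beta> r t = (1 - r\<^sup>2) powr \<gamma> * (1 - 2*r*t + r\<^sup>2) powr (-\<beta>)"

definition kernel_profile_deriv :: "real \<Rightarrow> real \<Rightarrow> real \<Rightarrow> real \<Rightarrow> real" where
  "kernel_profile_deriv \<gamma> \<beta> r t =
     \<gamma> * (1 - r\<^sup>2) powr (\<gamma> - 1) * (- 2 * r) * (1 - 2*r*t + r\<^sup>2) powr (-\<beta>)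
     + (1 - r\<^sup>2) powr \<gamma> * (-\<beta>) * (1 - 2*r*t + r\<^sup>2) powr (-\<beta> - 1) * (2*r - 2*t)"

lemma one_minus_two_mult_plus_square_pos:
  fixes r t :: real
  assumes "\<bar>r\<bar> < 1" "\<bar>t\<bar> \<le> 1"
  shows "1 - 2*r*t + r\<^sup>2 > 0"
proof -
  have "\<bar>r*t\<bar> \<le> \<bar>r\<bar>"
    using assms(2) by (simp add: abs_mult mult_left_le)
  moreover have "(1 - \<bar>r\<bar>)\<^sup>2 > 0"
    using assms(1) by simp
  then have "1 - 2*\<bar>r\<bar> + r\<^sup>2 > 0"
    by (simp add: power2_eq_square algebra_simps)
  ultimately show ?thesis
    by linarith
qed

lemma kernel_profile_has_real_derivative:
  assumes "\<bar>r\<bar> < 1" "\<bar>t\<bar> \<le> 1"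
  shows "((\<lambda>r. kernel_profile \<gamma> \<beta> r t) has_real_derivative kernel_profile_deriv \<gamma> \<beta> r t) (at r)"
proof -
  have "1 - r\<^sup>2 > 0"
    using assms(1) by (simp add: abs_square_less_1)
  moreover have "1 - 2*r*t + r\<^sup>2 > 0"
    using assms by (rule one_minus_two_mult_plus_square_pos)
  ultimately show ?thesis
    unfolding kernel_profile_def kernel_profile_deriv_def
    by (auto intro!: derivative_eq_intros simp: algebra_simps)
qed

lemma continuous_on_kernel_profile_deriv:
  "continuous_on ({0..1/2} \<times> {-1..1}) (\<lambda>(r, t). kernel_profile_deriv \<gamma> \<beta> r t)"
proof -
  have "1 - r\<^sup>2 \<noteq> 0 \<and> 1 - 2 * r * t + r\<^sup>2 \<noteq> 0" if "r \<in> {0..1/2}" "t \<in> {-1..1}" for r t :: real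
  proof -
    have "\<bar>r\<bar> < 1" "\<bar>t\<bar> \<le> 1"
      using that by auto
    then have "1 - r\<^sup>2 > 0" "1 - 2 * r * t + r\<^sup>2 > 0"
      by (simp_all add: abs_square_less_1 one_minus_two_mult_plus_square_pos)
    then show ?thesis by simp
  qed
  then have "\<forall>p\<in>{0..1/2::real} \<times> {-1..1::real}. 1 - (fst p)\<^sup>2 \<noteq> 0"
    "\<forall>p\<in>{0..1/2::real} \<times> {-1..1::real}. 1 - 2 * fst p * snd p + (fst p)\<^sup>2 \<noteq> 0"
    by (auto simp: mem_Times_iff)
  then show ?thesis
    unfolding kernel_profile_deriv_def case_prod_beta'
    by (intro continuous_intros) assumption+
qed

lemma kernel_profile_expansion:
  assumes "\<delta> > 0"
  shows "\<forall>\<^sub>F r in at_right 0. \<forall>t\<in>{-1..1}. \<bar>kernel_profile \<gamma> \<beta> r t - 1 - 2 * \<beta> * r * t\<bar> \<le> \<delta> * r"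
proof -
  have "\<forall>\<^sub>F r in at_right 0. \<forall>t\<in>{-1..1}. \<bar>kernel_profile \<gamma> \<beta> r t - kernel_profile \<gamma> \<beta> 0 t -
      r * kernel_profile_deriv \<gamma> \<beta> 0 t\<bar> \<le> \<delta> * r"
  proof (rule uniform_first_order_expansion [where a = "1/2" and K = "{-1..1}"])
    show "((\<lambda>r. kernel_profile \<gamma> \<beta> r t) has_real_derivative kernel_profile_deriv \<gamma> \<beta> r t) (at r)"
      if "r \<in> {0..1/2}" "t \<in> {-1..1}" for r t
      using that by (intro kernel_profile_has_real_derivative) auto
  qed (use assms continuous_on_kernel_profile_deriv in auto)
  then show ?thesis
    by (simp add: kernel_profile_def kernel_profile_deriv_def mult_ac)
qed

lemma C_const_pos: "n \<ge> 1 \<Longrightarrow> \<alpha> > -1/2 \<Longrightarrow> C_const n \<alpha> > 0"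
  unfolding C_const_def by (intro divide_pos_pos mult_pos_pos Gamma_real_pos) auto

lemma P_kernel_axis_sphere:
  fixes \<eta> :: "real^'n::finite" and \<alpha> :: real
  assumes \<eta>: "norm \<eta> = 1" and r: "0 \<le> r" "r < 1"
  shows "P_kernel \<alpha> (r *\<^sub>R axis i 1) \<eta> =
    C_const CARD('n) \<alpha> * kernel_profile (1 + 2*\<alpha>) ((CARD('n) + 2*\<alpha>) / 2) r (\<eta>$i)"
proof -
  let ?x = "r *\<^sub>R axis i 1 :: real^'n"
  have "(norm (?x - \<eta>))\<^sup>2 = ?x \<bullet> ?x - 2 * (?x \<bullet> \<eta>) + \<eta> \<bullet> \<eta>"
    by (simp add: power2_norm_eq_inner inner_diff_left inner_diff_right inner_commute)
  also have "\<dots> = 1 - 2 * r * \<eta>$i + r\<^sup>2"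
    using \<eta> by (simp add: power2_eq_square inner_axis_axis inner_axis' norm_eq_1)
  finally have dist_sq: "(norm (?x - \<eta>))\<^sup>2 = 1 - 2 * r * \<eta>$i + r\<^sup>2" .
  have "\<bar>\<eta>$i\<bar> \<le> 1"
    using component_le_norm_cart [of \<eta> i] \<eta> by simp
  then have "(norm (?x - \<eta>))\<^sup>2 > 0"
    unfolding dist_sq using r by (intro one_minus_two_mult_plus_square_pos) auto
  then have sq: "(norm (?x - \<eta>))\<^sup>2 = norm (?x - \<eta>) powr 2"
    by (simp add: powr_realpow)
  have "(1 - 2 * r * \<eta>$i + r\<^sup>2) powr ((CARD('n) + 2*\<alpha>) / 2) = (norm (?x - \<eta>) powr 2) powr ((CARD('n) + 2*\<alpha>) / 2)"
    by (simp only: dist_sq [symmetric] sq)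
  also have "\<dots> = norm (?x - \<eta>) powr (2 * ((CARD('n) + 2*\<alpha>) / 2))"
    by (rule powr_powr)
  also have "2 * ((CARD('n) + 2*\<alpha>) / 2) = CARD('n) + 2*\<alpha>"
    by simp
  finally have "(1 - 2 * r * \<eta>$i + r\<^sup>2) powr ((CARD('n) + 2*\<alpha>) / 2) = norm (?x - \<eta>) powr (CARD('n) + 2*\<alpha>)" .
  moreover have "norm ?x = r"
    using r by simp
  ultimately show ?thesis
    unfolding P_kernel_def kernel_profile_def by (simp only: powr_minus divide_inverse mult.assoc)
qed

section \<open>The derivative of \<open>G\<^sub>p\<close> at the origin\<close>

lemma INF_mult_left_nonneg:
  fixes f :: "'a \<Rightarrow> real"
  assumes "c \<ge> 0" "A \<noteq> {}" "bdd_below (f ` A)"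
  shows "(INF x\<in>A. c * f x) = c * (INF x\<in>A. f x)"
proof -
  have "c * Inf (f ` A) = (INF y\<in>f ` A. c * y)"
    using assms by (intro continuous_at_Inf_mono) (auto intro!: monoI mult_left_mono continuous_intros)
  then show ?thesis
    by (simp add: image_image)
qed

lemma borel_measurable_P_kernel [measurable]: "(\<lambda>\<zeta>. P_kernel \<alpha> x \<zeta>) \<in> borel_measurable borel"
  unfolding P_kernel_def by measurable

lemma G_fun_eq_INF_Lp_norm:
  "G_fun \<alpha> p e r = (INF a\<in>{0..}. Lp_norm sphere_sigma (p / (p - 1)) (\<lambda>\<eta>. P_kernel \<alpha> (r *\<^sub>R e) \<eta> - a))"
  by (simp add: G_fun_def Lp_norm_def)

lemma G_fun_at_0:
  fixes e :: "real^'n::finite"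
  assumes "C_const CARD('n) \<alpha> \<ge> 0"
  shows "G_fun \<alpha> p e 0 = 0"
proof -
  define C where "C = C_const CARD('n) \<alpha>"
  have "AE \<eta> in sphere_sigma. \<bar>P_kernel \<alpha> (0 *\<^sub>R e) \<eta> - C\<bar> powr (p / (p - 1)) = 0"
    using AE_sphere_sigma_norm_eq_1 by eventually_elim (simp add: P_kernel_def C_def)
  then have "Lp_norm sphere_sigma (p / (p - 1)) (\<lambda>\<eta>. P_kernel \<alpha> (0 *\<^sub>R e) \<eta> - C) = 0"
    unfolding Lp_norm_def by (subst integral_cong_AE [where g = "\<lambda>_. 0"]) auto
  then have "G_fun \<alpha> p e 0 \<le> 0"
    unfolding G_fun_eq_INF_Lp_norm using assms
    by (metis C_def atLeast_iff bdd_belowI2 cINF_lower Lp_norm_nonneg)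
  moreover have "G_fun \<alpha> p e 0 \<ge> 0"
    unfolding G_fun_eq_INF_Lp_norm by (intro cINF_greatest) auto
  ultimately show ?thesis by simp
qed

lemma G_fun_eq_scaled_INF:
  fixes e :: "real^'n::finite"
  assumes "p > 1" "C > 0" "r > 0"
  shows "G_fun \<alpha> p e r = C * r * (INF c\<in>(\<lambda>a. (C - a) / (C * r)) ` {0..}.
    Lp_norm sphere_sigma (p / (p - 1)) (\<lambda>\<eta>. c + (P_kernel \<alpha> (r *\<^sub>R e) \<eta> - C) / (C * r)))"
proof -
  have "Lp_norm sphere_sigma (p / (p - 1)) (\<lambda>\<eta>. P_kernel \<alpha> (r *\<^sub>R e) \<eta> - a) =
      C * r * Lp_norm sphere_sigma (p / (p - 1)) (\<lambda>\<eta>. (C - a) / (C * r) + (P_kernel \<alpha> (r *\<^sub>R e) \<eta> - C) / (C * r))"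
    for a
  proof -
    have "P_kernel \<alpha> (r *\<^sub>R e) \<eta> - a = C * r * ((C - a) / (C * r) + (P_kernel \<alpha> (r *\<^sub>R e) \<eta> - C) / (C * r))" for \<eta>
      using assms by (simp add: field_simps)
    then show ?thesis
      using assms by (simp add: Lp_norm_cmult)
  qed
  then show ?thesis
    unfolding G_fun_eq_INF_Lp_norm using assms
    by (simp add: INF_mult_left_nonneg bdd_belowI2 [where m = 0] image_image)
qed

lemma P_kernel_axis_expansion:
  fixes \<alpha> \<delta> :: real and i :: "'n::finite"
  assumes "\<delta> > 0" "C_const CARD('n) \<alpha> > 0"
  defines "C \<equiv> C_const CARD('n) \<alpha>"
  shows "\<forall>\<^sub>F r in at_right 0. AE \<eta> in sphere_sigma.
    \<bar>(P_kernel \<alpha> (r *\<^sub>R axis i 1) \<eta> - C) / (C * r) - (CARD('n) + 2*\<alpha>) * \<eta>$i\<bar> \<le> \<delta>"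
proof -
  define D where "D = CARD('n) + 2*\<alpha>"
  have "\<forall>\<^sub>F r in at_right 0. 0 < r \<and> r < (1::real)"
    by (rule eventually_at_rightI [of 0 1]) auto
  with kernel_profile_expansion [OF \<open>\<delta> > 0\<close>, of "1 + 2*\<alpha>" "D / 2"]
  show ?thesis
  proof eventually_elim
    case (elim r)
    show ?case
      using AE_sphere_sigma_norm_eq_1
    proof eventually_elim
      case (elim \<eta>)
      have "\<bar>\<eta>$i\<bar> \<le> 1"
        using component_le_norm_cart [of \<eta> i] elim by simp
      then have "\<bar>kernel_profile (1 + 2*\<alpha>) (D / 2) r (\<eta>$i) - 1 - D * r * \<eta>$i\<bar> \<le> \<delta> * r"
        using bspec [OF \<open>\<forall>t\<in>{-1..1}. _\<close>, of "\<eta>$i"] by (simp add: abs_le_iff)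
      moreover have "(P_kernel \<alpha> (r *\<^sub>R axis i 1) \<eta> - C) / (C * r) - D * \<eta>$i =
          (kernel_profile (1 + 2*\<alpha>) (D / 2) r (\<eta>$i) - 1 - D * r * \<eta>$i) / r"
        using assms(2) \<open>0 < r \<and> r < 1\<close> elim
        by (simp add: P_kernel_axis_sphere C_def D_def field_simps)
      ultimately show ?case
        using \<open>0 < r \<and> r < 1\<close> by (simp add: D_def abs_div divide_le_eq)
    qed
  qed
qed

lemma G_fun_axis_div_tendsto:
  fixes \<alpha> p :: real and i :: "'n::finite"
  assumes \<alpha>: "\<alpha> > -1/2" and p: "p > 1"
  defines "q \<equiv> p / (p - 1)" and "n \<equiv> real CARD('n)"
  shows "((\<lambda>r. G_fun \<alpha> p (axis i 1 :: real^'n) r / r) \<longlongrightarrow>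
           C_const n \<alpha> * Lp_norm sphere_sigma q (\<lambda>\<eta>. (n + 2*\<alpha>) * \<eta>$i)) (at_right 0)"
proof -
  interpret prob_space "sphere_sigma :: (real^'n) measure"
    by (rule prob_space_sphere_sigma)
  have q: "q \<ge> 1"
    using p by (simp add: q_def field_simps)
  have "n \<ge> 1"
    by (simp add: n_def)
  define C where "C = C_const n \<alpha>"
  define D where "D = n + 2*\<alpha>"
  have "C > 0" "D > 0"
    using C_const_pos [OF \<open>n \<ge> 1\<close> \<alpha>] \<open>n \<ge> 1\<close> \<alpha> by (simp_all add: C_def D_def)
  define u where "u r \<eta> = (P_kernel \<alpha> (r *\<^sub>R axis i 1) \<eta> - C) / (C * r)" for r and \<eta> :: "real^'n"
  define S where "S r = (\<lambda>a. (C - a) / (C * r)) ` {0..}" for r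
  have "AE \<eta> in sphere_sigma. \<bar>D * \<eta>$i\<bar> \<le> D"
    using AE_sphere_sigma_norm_eq_1
  proof eventually_elim
    case (elim \<eta>)
    then have "\<bar>\<eta>$i\<bar> \<le> 1"
      using component_le_norm_cart [of \<eta> i] by simp
    then show ?case
      using \<open>D > 0\<close> by (simp add: abs_mult mult_left_le)
  qed
  moreover have "0 \<in> S r" for r
    unfolding S_def using \<open>C > 0\<close> by (intro image_eqI [of _ _ C]) auto
  ultimately have lim: "((\<lambda>r. INF c\<in>S r. Lp_norm sphere_sigma q (\<lambda>\<eta>. c + u r \<eta>)) \<longlongrightarrow>
      Lp_norm sphere_sigma q (\<lambda>\<eta>. D * \<eta>$i)) (at_right 0)"
    using P_kernel_axis_expansion [of _ \<alpha> i] \<open>C > 0\<close>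
    by (intro tendsto_INF_Lp_norm_shift [OF q] Lp_norm_sphere_sigma_odd_le_shift [OF q])
       (auto simp: u_def C_def D_def n_def cart_eq_inner_axis)
  have eq: "\<forall>\<^sub>F r in at_right 0. G_fun \<alpha> p (axis i 1) r / r =
      C * (INF c\<in>S r. Lp_norm sphere_sigma q (\<lambda>\<eta>. c + u r \<eta>))"
  proof (rule eventually_at_rightI [of 0 1])
    fix r :: real assume "r \<in> {0<..<1}"
    then show "G_fun \<alpha> p (axis i 1) r / r = C * (INF c\<in>S r. Lp_norm sphere_sigma q (\<lambda>\<eta>. c + u r \<eta>))"
      using G_fun_eq_scaled_INF [OF p \<open>C > 0\<close>, of r \<alpha> "axis i 1"] by (simp add: S_def u_def q_def)
  qed simp
  show ?thesis
    using tendsto_mult_left [OF lim, of C] unfolding tendsto_cong [OF eq] C_def D_def .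
qed

theorem lemma3p4:
  fixes \<alpha> p :: real and i :: "'n::finite"
  assumes "CARD('n) \<ge> 3" and "\<alpha> > -1/2" and "p > 1"
  defines "q \<equiv> p / (p - 1)" and "n \<equiv> real CARD('n)"
  shows "((\<lambda>r. G_fun \<alpha> p (axis i 1 :: real^'n) r) has_real_derivative
           C_const n \<alpha> * (n + 2*\<alpha>) *
           (Gamma (n/2) * Gamma ((1+q)/2) / (sqrt pi * Gamma ((n+q)/2))) powr (1/q))
         (at 0 within {0..<1})"
proof -
  have "q > 0" "n \<ge> 1"
    using assms(3) by (simp_all add: q_def n_def)
  have C_pos: "C_const n \<alpha> > 0"
    using C_const_pos [OF \<open>n \<ge> 1\<close> assms(2)] .
  have "n + 2*\<alpha> \<ge> 0"
    using \<open>n \<ge> 1\<close> assms(2) by simp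
  then have "Lp_norm sphere_sigma q (\<lambda>\<eta>::real^'n. (n + 2*\<alpha>) * \<eta>$i) =
      (n + 2*\<alpha>) * Lp_norm sphere_sigma q (\<lambda>\<eta>::real^'n. \<eta>$i)"
    by (rule Lp_norm_cmult [OF \<open>q > 0\<close>])
  also have "\<dots> = (n + 2*\<alpha>) * (Gamma (n/2) * Gamma ((1+q)/2) / (sqrt pi * Gamma ((n+q)/2))) powr (1/q)"
    using \<open>q > 0\<close> by (simp add: Lp_norm_sphere_sigma_component n_def)
  finally have "Lp_norm sphere_sigma q (\<lambda>\<eta>::real^'n. (n + 2*\<alpha>) * \<eta>$i) =
      (n + 2*\<alpha>) * (Gamma (n/2) * Gamma ((1+q)/2) / (sqrt pi * Gamma ((n+q)/2))) powr (1/q)" .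
  moreover have "G_fun \<alpha> p (axis i 1 :: real^'n) 0 = 0"
    using C_pos by (intro G_fun_at_0) (simp add: n_def)
  moreover have "at (0::real) within {0..<1} \<le> at_right 0"
    unfolding at_within_def by (intro inf_mono order_refl) auto
  ultimately show ?thesis
    using G_fun_axis_div_tendsto [OF assms(2,3), of i]
    unfolding has_field_derivative_iff q_def [symmetric] n_def [symmetric]
    by (auto simp: mult.assoc elim!: filterlim_mono [OF _ order_refl])
qed

end
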